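(* Let $c\in\mathbb{R}^n$, $A\in\mathbb{R}^{m\times n}$, $b\in\mathbb{R}^m$ and $\emptyset\neq I\subseteq\{1,\dots,n\}$, and consider the binary mixed-integer linear problem $\min\{c^\top x : Ax\ge b,\ x_i\in\{0,1\} \text{ for } i\in I\}$. Let $X:=\{x\in\mathbb{R}^n : Ax\ge b,\ x_I\in[0,1]^I\}\neq\emptyset$, $Y:=\{0,1\}^I$, and consider $$\min_{x,y}\ \|x_I-y\|_1 \quad\text{s.t.}\quad x\in X,\ y\in Y. \qquad (\ast)$$ The idealized feasibility pump is the following method: take $x^0\in\arg\min\{c^\top x: x\in X\}$ and $y^0$ the componentwise rounding of $x^0_I$ to the nearest integer; for $k=0,1,\dots$ compute $x^{k+1}\in\arg\min_{x\in X}\|x_I-y^k\|_1$ (a global minimizer) and $y^{k+1}\in\arg\min_{y\in Y}\|x^{k+1}_I-y\|_1$ (i.e., a rounding of $x^{k+1}_I$), with ties in the $y$-step resolved by choosing the lexicographically minimal minimizer; stop as soon as the current iterate is a partial minimum of $(\ast)$ (no random perturbations are applied). Then the idealized feasibility pump terminates at a partial minimum $(x^*,y^* )$ of $(\ast)$ after a finite number of iterations. If this partial minimum satisfies $\|x^*_I-y^*\|_1=0$, then the point $(x^*,y^* )$ is feasible for the binary mixed-integer linear problem (i.e., $x^*$ is feasible for it).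
   Context: A point $(x^*,y^* )\in X\times Y$ is a partial minimum of $(\ast)$ if $\|x^*_I-y^*\|_1\le\|x_I-y^*\|_1$ for all $x\in X$ and $\|x^*_I-y^*\|_1\le \|x^*_I-y\|_1$ for all $y\in Y$. $x_I$ denotes the subvector of $x$ with components indexed by $I$. *)

theory Defs
  imports "HOL-Analysis.Analysis"
begin

text \<open>Vectors in R^n are rendered as real^'n, matrices in R^{m x n} as real^'n^'m.
  The index type 'n carries a linear order (used for the lexicographic tie-breaking).\<close>

definition feasX :: "real^'n^'m \<Rightarrow> real^'m \<Rightarrow> 'n set \<Rightarrow> (real^'n) set" where
  "feasX A b I = {x. (\<forall>j. b $ j \<le> (A *v x) $ j) \<and> (\<forall>i\<in>I. 0 \<le> x $ i \<and> x $ i \<le> 1)}"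

text \<open>Y = {0,1}^I; a point of Y is a vector that is 0/1 on I and 0 off I.\<close>
definition binY :: "'n set \<Rightarrow> (real^'n) set" where
  "binY I = {y. (\<forall>i\<in>I. y $ i \<in> {0, 1}) \<and> (\<forall>i. i \<notin> I \<longrightarrow> y $ i = 0)}"

definition distI :: "'n set \<Rightarrow> real^'n \<Rightarrow> real^'n \<Rightarrow> real" where
  "distI I x y = (\<Sum>i\<in>I. \<bar>x $ i - y $ i\<bar>)"

definition partial_min :: "real^'n^'m \<Rightarrow> real^'m \<Rightarrow> 'n set \<Rightarrow> real^'n \<Rightarrow> real^'n \<Rightarrow> bool" where
  "partial_min A b I x y \<longleftrightarrow> x \<in> feasX A b I \<and> y \<in> binY I \<and>
     (\<forall>x'\<in>feasX A b I. distI I x y \<le> distI I x' y) \<and>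
     (\<forall>y'\<in>binY I. distI I x y \<le> distI I x y')"

definition is_argmin_on :: "('a \<Rightarrow> real) \<Rightarrow> 'a set \<Rightarrow> 'a \<Rightarrow> bool" where
  "is_argmin_on f S z \<longleftrightarrow> z \<in> S \<and> (\<forall>z'\<in>S. f z \<le> f z')"

definition lex_less :: "('n::{finite,linorder}) set \<Rightarrow> real^('n::{finite,linorder}) \<Rightarrow> real^('n::{finite,linorder}) \<Rightarrow> bool" where
  "lex_less I y y' \<longleftrightarrow> (\<exists>i\<in>I. y $ i < y' $ i \<and> (\<forall>j\<in>I. j < i \<longrightarrow> y $ j = y' $ j))"

definition lex_min_in :: "('n::{finite,linorder}) set \<Rightarrow> (real^('n::{finite,linorder})) set \<Rightarrow> real^('n::{finite,linorder}) \<Rightarrow> bool" where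
  "lex_min_in I S y \<longleftrightarrow> y \<in> S \<and> (\<forall>y'\<in>S. y' \<noteq> y \<longrightarrow> lex_less I y y')"

definition milp_feasible :: "real^'n^'m \<Rightarrow> real^'m \<Rightarrow> 'n set \<Rightarrow> real^'n \<Rightarrow> bool" where
  "milp_feasible A b I x \<longleftrightarrow> (\<forall>j. b $ j \<le> (A *v x) $ j) \<and> (\<forall>i\<in>I. x $ i \<in> {0, 1})"

end

theory Submission
  imports Defs
begin

text \<open>The pump is an alternating minimization of \<open>\<parallel>x\<^sub>I - y\<parallel>\<^sub>1\<close> over \<open>X \<times> Y\<close>. As long as no
  partial minimum is reached, every \<open>x\<close>-step strictly improves the objective and no \<open>y\<close>-step
  worsens it, so the values \<open>min\<^sub>x\<^sub>\<in>\<^sub>X \<parallel>x\<^sub>I - y\<^sup>k\<parallel>\<^sub>1\<close> strictly decrease. Hence the rounded points \<open>y\<^sup>k\<close>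
  are pairwise distinct, which is impossible in the finite set \<open>Y = {0,1}\<^sup>I\<close>.\<close>

lemma finite_binY: "finite (binY (I::'n::finite set))"
proof -
  have "binY I \<subseteq> (\<lambda>f. \<chi> i. f i) ` (PiE UNIV (\<lambda>_. {0::real,1}))"
  proof
    fix y assume "y \<in> binY I"
    hence "restrict (\<lambda>i. y $ i) UNIV \<in> PiE UNIV (\<lambda>_. {0::real,1})"
      unfolding binY_def by auto
    moreover have "y = (\<chi> i. restrict (\<lambda>i. y $ i) UNIV i)" by (simp add: vec_eq_iff)
    ultimately show "y \<in> (\<lambda>f. \<chi> i. f i) ` (PiE UNIV (\<lambda>_. {0::real,1}))" by blast
  qed
  moreover have "finite (PiE (UNIV::'n set) (\<lambda>_. {0::real,1}))" by (rule finite_PiE) auto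
  ultimately show ?thesis using finite_subset by blast
qed

lemma alternating_minimization_stalls:
  fixes d :: "'a \<Rightarrow> 'b \<Rightarrow> real"
  assumes "finite Y"
    and y_opt: "\<And>k. is_argmin_on (d (x k)) Y (y k)"
    and x_opt: "\<And>k. is_argmin_on (\<lambda>z. d z (y k)) X (x (Suc k))"
  shows "\<exists>k. \<forall>z\<in>X. d (x k) (y k) \<le> d z (y k)"
proof (rule ccontr)
  assume "\<not> ?thesis"
  then have improvable: "\<exists>z\<in>X. d z (y k) < d (x k) (y k)" for k
    by (auto simp: not_le)
  define h where "h k = d (x (Suc k)) (y k)" for k
  have "h (Suc k) < h k" for k
  proof -
    have "h (Suc k) < d (x (Suc k)) (y (Suc k))"
      using improvable[of "Suc k"] x_opt[of "Suc k"] unfolding h_def is_argmin_on_def by force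
    also have "\<dots> \<le> h k"
      using y_opt[of "Suc k"] y_opt[of k] unfolding h_def is_argmin_on_def by auto
    finally show ?thesis .
  qed
  then have "strict_mono (\<lambda>k. - h k)"
    by (simp add: strict_mono_Suc_iff)
  then have "inj (\<lambda>k. - h k)"
    by (rule strict_mono_imp_inj_on)
  then have "inj h"
    by (simp add: inj_on_def)
  have h_determined_by_y: "h j = h k" if "y j = y k" for j k
    using x_opt[of j] x_opt[of k] that unfolding h_def is_argmin_on_def by (auto intro: antisym)
  have "inj y"
  proof (rule injI)
    fix j k
    assume "y j = y k"
    then show "j = k"
      using \<open>inj h\<close> h_determined_by_y by (blast dest: injD)
  qed
  moreover have "range y \<subseteq> Y"
    using y_opt unfolding is_argmin_on_def by auto
  ultimately show False
    using \<open>finite Y\<close> by (meson finite_imageD finite_subset infinite_UNIV_nat)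
qed

lemma milp_feasible_if_distI_eq_0:
  assumes "x \<in> feasX A b I" "y \<in> binY I" "distI I x y = 0"
  shows "milp_feasible A b I x"
proof -
  have "\<forall>i\<in>I. x $ i = y $ i"
    using \<open>distI I x y = 0\<close> unfolding distI_def by (subst (asm) sum_nonneg_eq_0_iff) auto
  then show ?thesis
    using assms(1,2) unfolding milp_feasible_def feasX_def binY_def by auto
qed

theorem mainTheorem2:
  fixes c :: "real^('n::{finite,linorder})"
    and A :: "real^('n::{finite,linorder})^('m::finite)"
    and b :: "real^('m::finite)"
    and I :: "('n::{finite,linorder}) set"
    and x y :: "nat \<Rightarrow> real^('n::{finite,linorder})"
  assumes "I \<noteq> {}"
    and "feasX A b I \<noteq> {}"
    and x0: "is_argmin_on (\<lambda>x. c \<bullet> x) (feasX A b I) (x 0)"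
    and y0: "is_argmin_on (distI I (x 0)) (binY I) (y 0)"
    and xstep: "\<And>k. \<not> partial_min A b I (x k) (y k) \<Longrightarrow>
                  is_argmin_on (\<lambda>z. distI I z (y k)) (feasX A b I) (x (Suc k))"
    and ystep: "\<And>k. \<not> partial_min A b I (x k) (y k) \<Longrightarrow>
                  lex_min_in I {w. is_argmin_on (distI I (x (Suc k))) (binY I) w} (y (Suc k))"
  shows "\<exists>K. partial_min A b I (x K) (y K) \<and> (\<forall>k<K. \<not> partial_min A b I (x k) (y k)) \<and>
           (distI I (x K) (y K) = 0 \<longrightarrow> milp_feasible A b I (x K))"
proof -
  let ?P = "\<lambda>k. partial_min A b I (x k) (y k)"
  have "\<exists>k. ?P k"
  proof (rule ccontr)
    assume "\<nexists>k. ?P k"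
    then have x_opt: "\<And>k. is_argmin_on (\<lambda>z. distI I z (y k)) (feasX A b I) (x (Suc k))"
      using xstep by blast
    have y_opt: "is_argmin_on (distI I (x k)) (binY I) (y k)" for k
    proof (cases k)
      case (Suc j)
      with ystep[of j] \<open>\<nexists>k. ?P k\<close> show ?thesis
        unfolding lex_min_in_def by simp
    qed (use y0 in simp)
    have x_in: "x k \<in> feasX A b I" for k
      using x0 x_opt[of "k - 1"] by (cases k) (auto simp: is_argmin_on_def)
    obtain k where "\<forall>z\<in>feasX A b I. distI I (x k) (y k) \<le> distI I z (y k)"
      using alternating_minimization_stalls[where d = "distI I" and x = x and y = y, OF finite_binY y_opt x_opt]
      by blast
    then have "?P k"
      using x_in[of k] y_opt[of k] unfolding partial_min_def is_argmin_on_def by blast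
    with \<open>\<nexists>k. ?P k\<close> show False by blast
  qed
  then have "?P (LEAST k. ?P k)" and "\<forall>k < (LEAST k. ?P k). \<not> ?P k"
    by (auto intro: LeastI_ex dest: not_less_Least)
  then show ?thesis
    using milp_feasible_if_distI_eq_0 unfolding partial_min_def by blast
qed

end
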